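(* Let $n\ge1$, let $p(x_1,\dots,x_n)=\prod_{i<j}(x_i+x_j)$, and let $\Gamma$ be the $n\times n$ matrix with entries $\Gamma_{ij}=B(\phi_i,\phi_j)$, $0\le i,j\le n-1$. Then $\det\Gamma=c\,p^2x_1\cdots x_n$ for some non-zero constant $c\in\mathbb C$.
   Context: $U(\mathfrak h_n)$ is the associative superalgebra generated by odd elements $\xi_1,\dots,\xi_n$ subject to $\xi_i\xi_j+\xi_j\xi_i=0$ for $i\neq j$; $x_i=\xi_i^2$ are central. Let $W_1$ be the free $\mathbb C[x_1,\dots,x_n]$-submodule of $U(\mathfrak h_n)$ with basis $\xi_1,\dots,\xi_n$, with the $\mathbb C[x_1,\dots,x_n]$-valued symmetric bilinear form $B(a,b)=[a,b]=ab+ba$. Let $T$ be the $\mathbb C[x_1,\dots,x_n]$-linear endomorphism of $W_1$ with $T(\xi_j)=\sum_i t_{ij}\xi_i$, where $t_{ii}=0$, $t_{ij}=x_j$ for $i<j$, $t_{ij}=-x_j$ for $i>j$. Set $\phi_0=\sum_{i}\xi_i$ and $\phi_k=T^k(\phi_0)$. *)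

theory Defs
  imports Complex_Main "Jordan_Normal_Form.Determinant"
begin

text \<open>Elements of W_1 are represented by their coefficient vectors a (index i < n,
  0-based, i.e. index i stands for xi_(i+1)) with entries in C[x_1..x_n]; polynomials are
  represented by their evaluations at an arbitrary point x : nat => complex
  (x i stands for x_(i+1)). Polynomial identities over C are equivalent to identities
  of the evaluations at all points.\<close>

text \<open>B(a,b) = ab + ba for a = sum a_i xi_i, b = sum b_i xi_i; since
  xi_i xi_j + xi_j xi_i = 0 for i ~= j and = 2 xi_i^2 = 2 x_i for i = j,
  B(a,b) = sum_i 2 x_i a_i b_i.\<close>
definition Bform :: "(nat \<Rightarrow> complex) \<Rightarrow> nat \<Rightarrow> (nat \<Rightarrow> complex) \<Rightarrow> (nat \<Rightarrow> complex) \<Rightarrow> complex" where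
  "Bform x n a b = (\<Sum>i<n. 2 * x i * a i * b i)"

definition tcoef :: "(nat \<Rightarrow> complex) \<Rightarrow> nat \<Rightarrow> nat \<Rightarrow> complex" where
  "tcoef x i j = (if i = j then 0 else if i < j then x j else - x j)"

text \<open>T(xi_j) = sum_i t_ij xi_i, hence (T a)_i = sum_j t_ij a_j.\<close>
definition Tmap :: "(nat \<Rightarrow> complex) \<Rightarrow> nat \<Rightarrow> (nat \<Rightarrow> complex) \<Rightarrow> (nat \<Rightarrow> complex)" where
  "Tmap x n a = (\<lambda>i. if i < n then (\<Sum>j<n. tcoef x i j * a j) else 0)"

definition phi0 :: "nat \<Rightarrow> nat \<Rightarrow> complex" where
  "phi0 n = (\<lambda>i. if i < n then 1 else 0)"

definition phi :: "(nat \<Rightarrow> complex) \<Rightarrow> nat \<Rightarrow> nat \<Rightarrow> (nat \<Rightarrow> complex)" where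
  "phi x n k = (Tmap x n ^^ k) (phi0 n)"

definition Gamma :: "(nat \<Rightarrow> complex) \<Rightarrow> nat \<Rightarrow> complex mat" where
  "Gamma x n = mat n n (\<lambda>(i, j). Bform x n (phi x n i) (phi x n j))"

definition ppoly :: "(nat \<Rightarrow> complex) \<Rightarrow> nat \<Rightarrow> complex" where
  "ppoly x n = (\<Prod>j<n. \<Prod>i<j. (x i + x j))"

end

theory Submission
  imports Defs
begin

text \<open>Since \<open>B(a, b) = \<Sum>\<^sub>i 2 x\<^sub>i a\<^sub>i b\<^sub>i\<close>, the Gram matrix is \<open>\<Gamma> = K\<^sup>T D K\<close>, where the
  columns of \<open>K\<close> are \<open>\<phi>\<^sub>0, \<dots>, \<phi>\<^sub>n\<^sub>-\<^sub>1\<close> and \<open>D = diag (2 x\<^sub>i)\<close>; so \<open>det \<Gamma> = 2\<^sup>n (\<Prod>\<^sub>i x\<^sub>i) (det K)\<^sup>2\<close>.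
  Consider the monic polynomials \<open>f\<^sub>i(t) = \<Prod>\<^sub>k\<^sub><\<^sub>i (t - x\<^sub>k) \<Prod>\<^sub>k\<^sub>>\<^sub>i (t + x\<^sub>k)\<close> of degree \<open>n - 1\<close>.
  Comparing \<open>f\<^sub>i\<close> with \<open>f\<^sub>i\<^sub>+\<^sub>1\<close> shows that \<open>\<Sum>\<^sub>j t\<^sub>i\<^sub>j f\<^sub>j(t) - t f\<^sub>i(t)\<close> does not depend on \<open>i\<close>.
  Hence \<open>T\<close> sends the vector of \<open>t\<^sup>m\<^sup>+\<^sup>1\<close>-coefficients of the \<open>f\<^sub>i\<close> to the vector of
  \<open>t\<^sup>m\<close>-coefficients plus a multiple of \<open>\<phi>\<^sub>0\<close>, the vector of leading coefficients, so \<open>K\<close> is the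
  coefficient matrix \<open>W\<close> of the \<open>f\<^sub>i\<close> times a unitriangular matrix. Finally \<open>det W = \<plusminus>p\<close>, by
  induction on \<open>n\<close>: a new variable \<open>x\<^sub>n\<close> multiplies the old \<open>f\<^sub>i\<close> by \<open>t + x\<^sub>n\<close> and adds
  \<open>f\<^sub>n = \<Prod>\<^sub>k\<^sub><\<^sub>n (t - x\<^sub>k)\<close>, which is \<open>\<Prod>\<^sub>k\<^sub><\<^sub>n (-x\<^sub>k - x\<^sub>n)\<close> modulo \<open>t + x\<^sub>n\<close>.\<close>

lemma det_mat_upper_triangular:
  fixes f :: "nat \<times> nat \<Rightarrow> 'a::comm_ring_1"
  assumes "\<And>i j. i < n \<Longrightarrow> j < i \<Longrightarrow> f (i, j) = 0"
  shows "det (mat n n f) = (\<Prod>i<n. f (i, i))"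
proof -
  have "upper_triangular (mat n n f)"
    using assms unfolding upper_triangular_def by auto
  then show ?thesis
    by (simp add: det_upper_triangular[of _ n] prod_list_diag_prod atLeast0LessThan)
qed

lemma sum_unitriangular_column:
  fixes g a :: "nat \<Rightarrow> 'a::comm_semiring_1"
  assumes "k < n"
  shows "(\<Sum>j<n. g j * (if j = k then 1 else if j < k then a j else 0)) =
    g k + (\<Sum>j<k. a j * g j)"
proof -
  have "g j * (if j = k then 1 else if j < k then a j else 0) =
      (if j = k then g k else 0) + (if j < k then a j * g j else 0)" for j
    by (auto simp: mult.commute)
  moreover have "{j \<in> {..<n}. j < k} = {..<k}" using assms by auto
  ultimately show ?thesis
    using assms by (simp add: sum.distrib flip: sum.inter_filter)
qed

lemma mult_eq_sum_shifted_monoms: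
  fixes p g :: "'a::comm_ring_1 poly"
  assumes "p = 0 \<or> degree p < n"
  shows "p * g = (\<Sum>m<n. smult (coeff p (n - Suc m)) (monom 1 (n - Suc m) * g))"
proof -
  have "p = (\<Sum>m<n. monom (coeff p m) m)"
  proof (cases n)
    case (Suc n')
    then have "degree p \<le> n'" using assms by auto
    then show ?thesis using poly_as_sum_of_monoms'[of p n'] Suc lessThan_Suc_atMost by simp
  qed (use assms in simp)
  also have "\<dots> = (\<Sum>m<n. monom (coeff p (n - Suc m)) (n - Suc m))"
    by (rule sum.nat_diff_reindex[symmetric])
  finally have p: "p = \<dots>" .
  have "smult c (monom 1 k * g) = monom c k * g" for c k
    by (metis mult_smult_left smult_monom mult.right_neutral)
  then show ?thesis
    by (subst (1) p) (simp add: sum_distrib_right)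
qed

definition coeff_mat :: "nat \<Rightarrow> (nat \<Rightarrow> 'a::zero poly) \<Rightarrow> 'a mat" where
  "coeff_mat n p = mat n n (\<lambda>(i, j). coeff (p i) (n - Suc j))"

lemma dim_coeff_mat [simp]: "dim_row (coeff_mat n p) = n" "dim_col (coeff_mat n p) = n"
  by (simp_all add: coeff_mat_def)

lemma index_coeff_mat [simp]:
  "i < n \<Longrightarrow> j < n \<Longrightarrow> coeff_mat n p $$ (i, j) = coeff (p i) (n - Suc j)"
  by (simp add: coeff_mat_def)

lemma coeff_mat_carrier [simp]: "coeff_mat n p \<in> carrier_mat n n"
  by (simp add: coeff_mat_def)

lemma coeff_mat_mult:
  fixes b p :: "nat \<Rightarrow> 'a::comm_ring_1 poly"
  assumes C: "C \<in> carrier_mat n n"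
    and p: "\<And>i. i < n \<Longrightarrow> p i = (\<Sum>m<n. smult (C $$ (i, m)) (b m))"
  shows "coeff_mat n p = C * coeff_mat n b"
proof (rule eq_matI)
  fix i j assume "i < dim_row (C * coeff_mat n b)" "j < dim_col (C * coeff_mat n b)"
  then have i: "i < n" and j: "j < n" using C by auto
  have "(C * coeff_mat n b) $$ (i, j) = (\<Sum>m<n. C $$ (i, m) * coeff (b m) (n - Suc j))"
    using i j C by (simp add: scalar_prod_def atLeast0LessThan)
  also have "\<dots> = coeff (p i) (n - Suc j)"
    by (simp add: p[OF i] coeff_sum)
  finally show "coeff_mat n p $$ (i, j) = (C * coeff_mat n b) $$ (i, j)"
    using i j by simp
qed (use C in auto)

lemma det_coeff_mat_monic:
  fixes b :: "nat \<Rightarrow> 'a::comm_ring_1 poly"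
  assumes "\<And>i. i < n \<Longrightarrow> degree (b i) = n - Suc i \<and> lead_coeff (b i) = 1"
  shows "det (coeff_mat n b) = 1"
proof -
  have "coeff (b i) (n - Suc i) = 1" if "i < n" for i
    using assms that by metis
  then show ?thesis
    unfolding coeff_mat_def
    by (subst det_mat_upper_triangular) (auto intro!: coeff_eq_0 prod.neutral simp: assms)
qed

definition linear_factor_basis :: "nat \<Rightarrow> 'a \<Rightarrow> nat \<Rightarrow> 'a::comm_ring_1 poly" where
  "linear_factor_basis n a m = (if m < n then monom 1 (n - Suc m) * [:a, 1:] else 1)"

lemma det_coeff_mat_linear_factor_basis:
  fixes a :: "'a::idom"
  shows "det (coeff_mat (Suc n) (linear_factor_basis n a)) = 1"
proof (rule det_coeff_mat_monic)
  fix m assume m: "m < Suc n"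
  have deg: "degree (monom 1 k * [:a, 1:]) = Suc k" for k
    using degree_mult_eq[of "monom 1 k" "[:a, 1:]"] by (simp add: degree_monom_eq)
  have lead: "coeff (monom 1 k * [:a, 1:]) (Suc k) = 1" for k
    by (simp add: coeff_monom_mult)
  show "degree (linear_factor_basis n a m) = Suc n - Suc m \<and>
      lead_coeff (linear_factor_basis n a m) = 1"
  proof (cases "m < n")
    case True
    have "Suc n - Suc m = Suc (n - Suc m)" using True by simp
    then show ?thesis
      unfolding linear_factor_basis_def if_P[OF True] deg using lead by simp
  next
    case False
    then show ?thesis using m by (simp add: linear_factor_basis_def)
  qed
qed

lemma synthetic_div_linear_factor:
  fixes h :: "'a::comm_ring_1 poly"
  assumes "degree h \<le> n"
  shows "h = synthetic_div h (- a) * [:a, 1:] + [:poly h (- a):]"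
    and "synthetic_div h (- a) = 0 \<or> degree (synthetic_div h (- a)) < n"
proof -
  show "h = synthetic_div h (- a) * [:a, 1:] + [:poly h (- a):]"
    using synthetic_div_correct'[of "- a" h] by (simp add: mult.commute)
  show "synthetic_div h (- a) = 0 \<or> degree (synthetic_div h (- a)) < n"
  proof (cases "degree h = 0")
    case True
    then obtain c where "h = [:c:]" by (meson degree_eq_zeroE)
    then show ?thesis by simp
  next
    case False
    then have "degree h - 1 < n" using assms by linarith
    then show ?thesis by (simp add: degree_synthetic_div)
  qed
qed

lemma det_coeff_mat_Suc_linear_factor:
  fixes P p :: "nat \<Rightarrow> 'a::idom poly"
  assumes P: "\<And>i. i < n \<Longrightarrow> P i = p i * [:a, 1:]"
    and p: "\<And>i. i < n \<Longrightarrow> p i = 0 \<or> degree (p i) < n"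
    and Pn: "degree (P n) \<le> n"
  shows "det (coeff_mat (Suc n) P) = poly (P n) (- a) * det (coeff_mat n p)"
proof -
  define q where "q = synthetic_div (P n) (- a)"
  define r where "r = poly (P n) (- a)"
  define b where "b = linear_factor_basis n a"
  define R where "R = mat 1 n (\<lambda>(_, m). coeff q (n - Suc m))"
  define N where "N = four_block_mat (coeff_mat n p) (0\<^sub>m n 1) R (mat 1 1 (\<lambda>_. r))"
  have N: "N \<in> carrier_mat (Suc n) (Suc n)"
    using four_block_carrier_mat[of "coeff_mat n p" n n "mat 1 1 (\<lambda>_. r)" 1 1]
    by (simp add: N_def)
  have "P i = (\<Sum>m<Suc n. smult (N $$ (i, m)) (b m))" if "i < Suc n" for i
  proof (cases "i < n")
    case True
    have "(\<Sum>m<Suc n. smult (N $$ (i, m)) (b m)) =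
        (\<Sum>m<n. smult (coeff (p i) (n - Suc m)) (monom 1 (n - Suc m) * [:a, 1:]))"
      using True by (auto simp: N_def b_def linear_factor_basis_def intro!: sum.cong)
    also have "\<dots> = P i"
      unfolding P[OF True] by (rule mult_eq_sum_shifted_monoms[OF p[OF True], symmetric])
    finally show ?thesis ..
  next
    case False
    then have i: "i = n" using that by simp
    have "(\<Sum>m<Suc n. smult (N $$ (i, m)) (b m)) =
        (\<Sum>m<n. smult (coeff q (n - Suc m)) (monom 1 (n - Suc m) * [:a, 1:])) + [:r:]"
      using i by (auto simp: N_def b_def R_def linear_factor_basis_def intro!: sum.cong)
    also have "\<dots> = P i"
      using mult_eq_sum_shifted_monoms[OF synthetic_div_linear_factor(2)[OF Pn, of a], of "[:a, 1:]"]
        synthetic_div_linear_factor(1)[OF Pn, of a] i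
      by (simp add: q_def r_def)
    finally show ?thesis ..
  qed
  then have "coeff_mat (Suc n) P = N * coeff_mat (Suc n) b"
    by (rule coeff_mat_mult[OF N])
  moreover have "det N = det (coeff_mat n p) * r"
  proof -
    have "det (mat 1 1 (\<lambda>_. r)) = r"
      by (subst det_mat_upper_triangular) auto
    then show ?thesis
      unfolding N_def by (subst det_four_block_mat_upper_right_zero_col) (auto simp: R_def)
  qed
  ultimately show ?thesis
    using N det_coeff_mat_linear_factor_basis[of n a]
    by (simp add: det_mult[of _ "Suc n"] b_def r_def)
qed

definition fpoly :: "(nat \<Rightarrow> 'a::comm_ring_1) \<Rightarrow> nat \<Rightarrow> nat \<Rightarrow> 'a poly" where
  "fpoly x n i = (\<Prod>k<i. [:- x k, 1:]) * (\<Prod>k\<in>{i<..<n}. [:x k, 1:])"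

lemma degree_fpoly:
  fixes x :: "nat \<Rightarrow> 'a::idom"
  assumes "i < n"
  shows "degree (fpoly x n i) = n - 1"
  using assms unfolding fpoly_def
  by (subst degree_mult_eq) (auto simp: degree_prod_eq_sum_degree)

lemma lead_coeff_fpoly:
  fixes x :: "nat \<Rightarrow> 'a::idom"
  shows "lead_coeff (fpoly x n i) = 1"
  unfolding fpoly_def lead_coeff_mult lead_coeff_prod by simp

lemma fpoly_Suc_less: "i < n \<Longrightarrow> fpoly x (Suc n) i = fpoly x n i * [:x n, 1:]"
proof -
  assume "i < n"
  then have "{i<..<Suc n} = insert n {i<..<n}" by auto
  then show ?thesis unfolding fpoly_def by (simp add: algebra_simps)
qed

lemma fpoly_Suc_last: "fpoly x (Suc n) n = (\<Prod>k<n. [:- x k, 1:])"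
proof -
  have "{n<..<Suc n} = {}" by auto
  then show ?thesis unfolding fpoly_def by simp
qed

lemma fpoly_consecutive:
  assumes "Suc i < n"
  shows "pCons 0 (fpoly x n i - fpoly x n (Suc i)) =
         smult (x i) (fpoly x n i) + smult (x (Suc i)) (fpoly x n (Suc i))"
proof -
  define P where "P = (\<Prod>k<i. [:- x k, 1:]) * (\<Prod>k\<in>{Suc i<..<n}. [:x k, 1:])"
  have "{i<..<n} = insert (Suc i) {Suc i<..<n}" using assms by auto
  then have fi: "fpoly x n i = [:x (Suc i), 1:] * P"
    unfolding fpoly_def P_def by (simp add: algebra_simps)
  have fSuc: "fpoly x n (Suc i) = [:- x i, 1:] * P"
    unfolding fpoly_def P_def by (simp add: lessThan_Suc algebra_simps)
  show ?thesis
    unfolding fi fSuc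
    by (simp add: smult_add_right smult_diff_right algebra_simps flip: add_pCons diff_pCons)
      (metis add_pCons add_0)
qed

definition T_defect :: "(nat \<Rightarrow> complex) \<Rightarrow> nat \<Rightarrow> nat \<Rightarrow> complex poly" where
  "T_defect x n i = (\<Sum>j<n. smult (tcoef x i j) (fpoly x n j)) - pCons 0 (fpoly x n i)"

lemma T_defect_Suc:
  assumes "Suc i < n"
  shows "T_defect x n (Suc i) = T_defect x n i"
proof -
  have "smult (tcoef x i j - tcoef x (Suc i) j) (fpoly x n j) =
     (if j = i then smult (x i) (fpoly x n i) else 0) +
     (if j = Suc i then smult (x (Suc i)) (fpoly x n (Suc i)) else 0)" for j
    unfolding tcoef_def by auto
  then have "(\<Sum>j<n. smult (tcoef x i j - tcoef x (Suc i) j) (fpoly x n j)) =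
      smult (x i) (fpoly x n i) + smult (x (Suc i)) (fpoly x n (Suc i))"
    using assms by (simp add: sum.distrib)
  then have "T_defect x n i - T_defect x n (Suc i) = 0"
    unfolding T_defect_def fpoly_consecutive[OF assms, symmetric]
    by (simp add: smult_diff_left sum_subtractf algebra_simps flip: diff_pCons)
  then show ?thesis by simp
qed

lemma T_defect_eq: "i < n \<Longrightarrow> T_defect x n i = T_defect x n 0"
  by (induction i) (simp_all add: T_defect_Suc)

definition fpoly_col :: "(nat \<Rightarrow> complex) \<Rightarrow> nat \<Rightarrow> nat \<Rightarrow> nat \<Rightarrow> complex" where
  "fpoly_col x n j = (\<lambda>i. if i < n then coeff (fpoly x n i) (n - Suc j) else 0)"

lemma fpoly_col_0: "fpoly_col x n 0 = phi0 n"
proof -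
  have "coeff (fpoly x n i) (n - 1) = 1" if "i < n" for i
    using lead_coeff_fpoly[of x n i] degree_fpoly[OF that, of x] by simp
  then show ?thesis by (auto simp: fpoly_col_def phi0_def)
qed

lemma Tmap_fpoly_col:
  assumes "Suc j < n"
  shows "Tmap x n (fpoly_col x n j) =
    (\<lambda>i. fpoly_col x n (Suc j) i + coeff (T_defect x n 0) (n - Suc j) * phi0 n i)"
proof
  fix i
  show "Tmap x n (fpoly_col x n j) i =
      fpoly_col x n (Suc j) i + coeff (T_defect x n 0) (n - Suc j) * phi0 n i"
  proof (cases "i < n")
    case True
    have shift: "n - Suc j = Suc (n - Suc (Suc j))" using assms by simp
    have "Tmap x n (fpoly_col x n j) i =
        coeff (\<Sum>l<n. smult (tcoef x i l) (fpoly x n l)) (n - Suc j)"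
      using True by (simp add: Tmap_def fpoly_col_def coeff_sum)
    also have "\<dots> = coeff (T_defect x n i + pCons 0 (fpoly x n i)) (n - Suc j)"
      by (simp add: T_defect_def)
    also have "\<dots> = coeff (T_defect x n 0) (n - Suc j) + coeff (fpoly x n i) (n - Suc (Suc j))"
      using T_defect_eq[OF True] by (simp add: shift)
    finally show ?thesis using True by (simp add: fpoly_col_def phi0_def)
  qed (simp add: Tmap_def fpoly_col_def phi0_def)
qed

lemma Tmap_lincomb:
  assumes "finite S"
  shows "Tmap x n (\<lambda>i. a i + (\<Sum>j\<in>S. u j * v j i)) =
    (\<lambda>i. Tmap x n a i + (\<Sum>j\<in>S. u j * Tmap x n (v j) i))"
proof
  fix i
  have "(\<Sum>l<n. tcoef x i l * (\<Sum>j\<in>S. u j * v j l)) =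
      (\<Sum>j\<in>S. u j * (\<Sum>l<n. tcoef x i l * v j l))"
    by (simp add: sum_distrib_left algebra_simps sum.swap[of _ S])
  then show "Tmap x n (\<lambda>i. a i + (\<Sum>j\<in>S. u j * v j i)) i =
      Tmap x n a i + (\<Sum>j\<in>S. u j * Tmap x n (v j) i)"
    by (simp add: Tmap_def distrib_left sum.distrib)
qed

lemma phi_unitriangular:
  assumes "k < n"
  shows "\<exists>u. phi x n k = (\<lambda>i. fpoly_col x n k i + (\<Sum>j<k. u j * fpoly_col x n j i))"
  using assms
proof (induction k)
  case 0
  then show ?case by (simp add: phi_def fpoly_col_0)
next
  case (Suc k)
  define c where "c j = coeff (T_defect x n 0) (n - Suc j)" for j
  obtain u where u: "phi x n k = (\<lambda>i. fpoly_col x n k i + (\<Sum>j<k. u j * fpoly_col x n j i))"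
    using Suc by auto
  define u' where "u' j = (if j = 0 then c k + (\<Sum>l<k. u l * c l) else u (j - 1))" for j
  have "phi x n (Suc k) =
      (\<lambda>i. Tmap x n (fpoly_col x n k) i + (\<Sum>j<k. u j * Tmap x n (fpoly_col x n j) i))"
    by (simp add: phi_def u[unfolded phi_def] Tmap_lincomb)
  also have "\<dots> = (\<lambda>i. fpoly_col x n (Suc k) i + c k * phi0 n i +
      (\<Sum>j<k. u j * (fpoly_col x n (Suc j) i + c j * phi0 n i)))"
    using Suc.prems by (simp add: Tmap_fpoly_col c_def)
  also have "\<dots> = (\<lambda>i. fpoly_col x n (Suc k) i + (\<Sum>j<Suc k. u' j * fpoly_col x n j i))"
  proof
    fix i
    have split: "(\<Sum>j<Suc k. u' j * fpoly_col x n j i) =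
        (c k + (\<Sum>l<k. u l * c l)) * phi0 n i + (\<Sum>j<k. u j * fpoly_col x n (Suc j) i)"
      by (simp only: sum.lessThan_Suc_shift) (simp add: u'_def fpoly_col_0)
    show "fpoly_col x n (Suc k) i + c k * phi0 n i +
        (\<Sum>j<k. u j * (fpoly_col x n (Suc j) i + c j * phi0 n i)) =
        fpoly_col x n (Suc k) i + (\<Sum>j<Suc k. u' j * fpoly_col x n j i)"
      unfolding split by (simp add: algebra_simps sum.distrib sum_distrib_left)
  qed
  finally show ?case by blast
qed

definition krylov_mat :: "(nat \<Rightarrow> complex) \<Rightarrow> nat \<Rightarrow> complex mat" where
  "krylov_mat x n = mat n n (\<lambda>(i, k). phi x n k i)"

lemma det_krylov_mat: "det (krylov_mat x n) = det (coeff_mat n (fpoly x n))"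
proof -
  have "\<forall>k. \<exists>u. k < n \<longrightarrow>
      phi x n k = (\<lambda>i. fpoly_col x n k i + (\<Sum>j<k. u j * fpoly_col x n j i))"
    using phi_unitriangular by blast
  then obtain U where U: "\<And>k. k < n \<Longrightarrow>
      phi x n k = (\<lambda>i. fpoly_col x n k i + (\<Sum>j<k. U k j * fpoly_col x n j i))"
    by metis
  define V where "V = mat n n (\<lambda>(j, k). if j = k then 1 else if j < k then U k j else (0::complex))"
  have V: "V \<in> carrier_mat n n" by (simp add: V_def)
  have "krylov_mat x n = coeff_mat n (fpoly x n) * V"
  proof (rule eq_matI)
    fix i k assume "i < dim_row (coeff_mat n (fpoly x n) * V)"
      and "k < dim_col (coeff_mat n (fpoly x n) * V)"
    then have i: "i < n" and k: "k < n" using V by auto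
    have "(coeff_mat n (fpoly x n) * V) $$ (i, k) =
        (\<Sum>j<n. fpoly_col x n j i * (if j = k then 1 else if j < k then U k j else 0))"
      using i k by (simp add: V_def fpoly_col_def scalar_prod_def atLeast0LessThan)
    also have "\<dots> = phi x n k i"
      by (simp add: sum_unitriangular_column[OF k] U[OF k])
    finally show "krylov_mat x n $$ (i, k) = (coeff_mat n (fpoly x n) * V) $$ (i, k)"
      using i k by (simp add: krylov_mat_def)
  qed (use V in \<open>auto simp: krylov_mat_def\<close>)
  moreover have "det V = 1"
    unfolding V_def by (subst det_mat_upper_triangular) auto
  ultimately show ?thesis
    using V by (simp add: det_mult[of _ n])
qed

lemma det_Gamma: "det (Gamma x n) = (\<Prod>i<n. 2 * x i) * det (krylov_mat x n) ^ 2"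
proof -
  define D where "D = mat n n (\<lambda>(i, j). if i = j then 2 * x i else (0::complex))"
  have D: "D \<in> carrier_mat n n" and K: "krylov_mat x n \<in> carrier_mat n n"
    by (simp_all add: D_def krylov_mat_def)
  have "Gamma x n = transpose_mat (krylov_mat x n) * (D * krylov_mat x n)"
  proof (rule eq_matI)
    fix a b assume "a < dim_row (transpose_mat (krylov_mat x n) * (D * krylov_mat x n))"
      "b < dim_col (transpose_mat (krylov_mat x n) * (D * krylov_mat x n))"
    then have a: "a < n" and b: "b < n" using K D by auto
    have "(D * krylov_mat x n) $$ (i, b) = 2 * x i * phi x n b i" if "i < n" for i
    proof -
      have "(D * krylov_mat x n) $$ (i, b) = (\<Sum>l<n. (if i = l then 2 * x i else 0) * phi x n b l)"
        using that b by (simp add: D_def krylov_mat_def scalar_prod_def atLeast0LessThan)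
      also have "\<dots> = (\<Sum>l<n. if i = l then 2 * x i * phi x n b l else 0)"
        by (rule sum.cong) auto
      finally show ?thesis using that by simp
    qed
    then have "(transpose_mat (krylov_mat x n) * (D * krylov_mat x n)) $$ (a, b) =
        (\<Sum>i<n. 2 * x i * phi x n a i * phi x n b i)"
      using a b K D by (simp add: scalar_prod_def krylov_mat_def atLeast0LessThan algebra_simps)
    then show "Gamma x n $$ (a, b) =
        (transpose_mat (krylov_mat x n) * (D * krylov_mat x n)) $$ (a, b)"
      using a b by (simp add: Gamma_def Bform_def)
  qed (use K D in \<open>auto simp: Gamma_def\<close>)
  moreover have "det D = (\<Prod>i<n. 2 * x i)"
    unfolding D_def by (subst det_mat_upper_triangular) auto
  ultimately show ?thesis
    using D K by (simp add: det_mult[of _ n] det_transpose power2_eq_square)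
qed

lemma det_coeff_mat_fpoly:
  "det (coeff_mat n (fpoly x n)) = (-1) ^ (\<Sum>k<n. k) * ppoly x n"
proof (induction n)
  case 0
  show ?case by (simp add: ppoly_def)
next
  case (Suc n)
  have "det (coeff_mat (Suc n) (fpoly x (Suc n))) =
      poly (fpoly x (Suc n) n) (- x n) * det (coeff_mat n (fpoly x n))"
    by (rule det_coeff_mat_Suc_linear_factor) (auto simp: fpoly_Suc_less degree_fpoly)
  moreover have "poly (fpoly x (Suc n) n) (- x n) = (\<Prod>k<n. - (x k + x n))"
    by (simp add: fpoly_Suc_last poly_prod)
  moreover have "\<dots> = (-1) ^ n * (\<Prod>k<n. x k + x n)"
    using prod_uminus[of "\<lambda>k. x k + x n" "{..<n}"] by simp
  ultimately show ?case
    by (simp add: Suc.IH ppoly_def power_add)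
qed

theorem lemma3p2:
  fixes n :: nat
  assumes "n \<ge> 1"
  shows "\<exists>c :: complex. c \<noteq> 0 \<and>
           (\<forall>x :: nat \<Rightarrow> complex. det (Gamma x n) = c * (ppoly x n)^2 * (\<Prod>i<n. x i))"
proof (intro exI[of _ "2 ^ n"] conjI allI)
  fix x :: "nat \<Rightarrow> complex"
  have "det (Gamma x n) = (\<Prod>i<n. 2 * x i) * ((-1) ^ (\<Sum>k<n. k) * ppoly x n) ^ 2"
    by (simp add: det_Gamma det_krylov_mat det_coeff_mat_fpoly)
  moreover have "((-1 :: complex) ^ k) ^ 2 = 1" for k
    by (simp flip: power_mult)
  ultimately show "det (Gamma x n) = 2 ^ n * (ppoly x n)^2 * (\<Prod>i<n. x i)"
    by (simp add: prod.distrib power_mult_distrib)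
qed simp

end
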